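(* The assignment sending a pair of slices $(X,Y)$ to the presheaf $(X\wedge Y)(-)$ and a pair of morphisms $(S,T):(X,Y)\to(X',Y')$ of $\mathsf{Slice}$ to the natural transformation $S\wedge T:=(S\wedge Y')\circ(X\wedge T)$ (whose component at $Z$ is $C\mapsto C\cap T\cap S$) is a functor $\mathsf{Slice}\times\mathsf{Slice}\to[\mathsf{Slice}^{op},\mathsf{Set}]$.
   Context: Fix a connected, time-orientable Lorentzian manifold $\mathcal{M}$ with a fixed time-orientation (no further causality assumptions). A causal curve is an equivalence class, up to monotone reparametrisation, of smooth regular paths $\mu:\iota\to\mathcal{M}$ ($\iota\subseteq\mathbb{R}$ an interval) whose tangent is everywhere timelike or null; it is future-directed if the tangent is everywhere future-directed. Write $x\prec y$ if $x=y$ or there is a future-directed causal curve from $x$ to $y$. A region $A\subseteq\mathcal{M}$ is spacelike if no two distinct points $x,y\in A$ satisfy $x\prec y$. A slice is a closed spacelike subset of $\mathcal{M}$. For regions $A,B$, $\mathcal{C}[A,B]$ is the set of future-directed causal curves passing through $A$ and then $B$: for a representative path $\mu:\iota\to\mathcal{M}$, there exists $q\in\iota$ with $\mu(q)\in B$, and for every such $q$ there exists $p\le q$ with $\mu(p)\in A$. The category $\mathsf{Slice}$ has slices as objects, $\mathsf{Slice}(X,Y)=\mathcal{P}(\mathcal{C}[X,Y])$ (the powerset), composition $T\circ S:=T\cap S$, identities $1_X=\mathcal{C}[X,X]$. For slices $X,Y$, $(X\wedge Y)(-):\mathsf{Slice}^{op}\to\mathsf{Set}$ is the presheaf $(X\wedge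 Y)(Z):=\mathcal{P}(\mathcal{C}[Z,X]\cap\mathcal{C}[Z,Y])$, $(X\wedge Y)(U:Z'\to Z):C\mapsto C\cap U$. For $S:X\to X'$ and $T:Y\to Y'$, $(S\wedge Y)$ is the natural transformation $(X\wedge Y)(-)\Rightarrow(X'\wedge Y)(-)$ with components $C\mapsto C\cap S$, and $(X\wedge T):(X\wedge Y)(-)\Rightarrow(X\wedge Y')(-)$ has components $C\mapsto C\cap T$. *)

theory Defs
  imports "HOL-Analysis.Analysis"
begin

text \<open>The spacetime is abstracted by its type of points 'p (with its topology) together
  with the predicate fdc deciding which parametrised paths (interval, map) are smooth,
  regular, future-directed causal paths.\<close>

type_synonym 'p path = "real set \<times> (real \<Rightarrow> 'p)"

definition fdc_path :: "(real set \<Rightarrow> (real \<Rightarrow> 'p) \<Rightarrow> bool) \<Rightarrow> 'p path \<Rightarrow> bool" where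
  "fdc_path fdc r \<longleftrightarrow> is_interval (fst r) \<and> fdc (fst r) (snd r)"

definition reparam :: "'p path \<Rightarrow> 'p path \<Rightarrow> bool" where
  "reparam r' r \<longleftrightarrow> (\<exists>\<phi>. bij_betw \<phi> (fst r') (fst r) \<and> strict_mono_on (fst r') \<phi>
      \<and> (\<forall>t\<in>fst r'. snd r' t = snd r (\<phi> t)))"

text \<open>A causal curve: the class of a future-directed causal path up to reparametrisation.\<close>
definition causal_curves :: "(real set \<Rightarrow> (real \<Rightarrow> 'p) \<Rightarrow> bool) \<Rightarrow> 'p path set set" where
  "causal_curves fdc = {{q. fdc_path fdc q \<and> reparam q r} | r. fdc_path fdc r}"

definition precedes :: "(real set \<Rightarrow> (real \<Rightarrow> 'p) \<Rightarrow> bool) \<Rightarrow> 'p \<Rightarrow> 'p \<Rightarrow> bool" where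
  "precedes fdc x y \<longleftrightarrow> x = y \<or>
     (\<exists>r a b. fdc_path fdc r \<and> a \<in> fst r \<and> b \<in> fst r \<and> a \<le> b \<and> snd r a = x \<and> snd r b = y)"

definition spacelike :: "(real set \<Rightarrow> (real \<Rightarrow> 'p) \<Rightarrow> bool) \<Rightarrow> 'p set \<Rightarrow> bool" where
  "spacelike fdc A \<longleftrightarrow> (\<forall>x\<in>A. \<forall>y\<in>A. x \<noteq> y \<longrightarrow> \<not> precedes fdc x y)"

definition slice :: "(real set \<Rightarrow> (real \<Rightarrow> 'p) \<Rightarrow> bool) \<Rightarrow> ('p::topological_space) set \<Rightarrow> bool" where
  "slice fdc X \<longleftrightarrow> closed X \<and> spacelike fdc X"

definition passes :: "'p set \<Rightarrow> 'p set \<Rightarrow> 'p path \<Rightarrow> bool" where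
  "passes A B r \<longleftrightarrow> (\<exists>q\<in>fst r. snd r q \<in> B) \<and>
     (\<forall>q\<in>fst r. snd r q \<in> B \<longrightarrow> (\<exists>p\<in>fst r. p \<le> q \<and> snd r p \<in> A))"

definition Ccurves :: "(real set \<Rightarrow> (real \<Rightarrow> 'p) \<Rightarrow> bool) \<Rightarrow> 'p set \<Rightarrow> 'p set \<Rightarrow> 'p path set set" where
  "Ccurves fdc A B = {\<gamma> \<in> causal_curves fdc. \<forall>r\<in>\<gamma>. passes A B r}"

definition slice_hom :: "(real set \<Rightarrow> (real \<Rightarrow> 'p) \<Rightarrow> bool) \<Rightarrow> 'p set \<Rightarrow> 'p set \<Rightarrow> 'p path set set set" where
  "slice_hom fdc X Y = Pow (Ccurves fdc X Y)"

definition slice_id :: "(real set \<Rightarrow> (real \<Rightarrow> 'p) \<Rightarrow> bool) \<Rightarrow> 'p set \<Rightarrow> 'p path set set" where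
  "slice_id fdc X = Ccurves fdc X X"

definition slice_comp :: "'p path set set \<Rightarrow> 'p path set set \<Rightarrow> 'p path set set" where
  "slice_comp T S = T \<inter> S"

text \<open>The presheaf (X \<and> Y)(-): object part and action on a morphism U : Z' \<rightarrow> Z.\<close>
definition wedge_obj :: "(real set \<Rightarrow> (real \<Rightarrow> 'p) \<Rightarrow> bool) \<Rightarrow> 'p set \<Rightarrow> 'p set \<Rightarrow> 'p set \<Rightarrow> 'p path set set set" where
  "wedge_obj fdc X Y Z = Pow (Ccurves fdc Z X \<inter> Ccurves fdc Z Y)"

definition wedge_act :: "'p path set set \<Rightarrow> 'p path set set \<Rightarrow> 'p path set set" where
  "wedge_act U C = C \<inter> U"

text \<open>Component at Z of S \<and> T := (S \<and> Y') o (X \<and> T).\<close>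
definition wedge_arr :: "'p path set set \<Rightarrow> 'p path set set \<Rightarrow> 'p set \<Rightarrow> 'p path set set \<Rightarrow> 'p path set set" where
  "wedge_arr S T Z C = (C \<inter> T) \<inter> S"

end

theory Submission
  imports Defs
begin

text \<open>Every structure map of the construction is an intersection, so the functor equations
  are plain set algebra.  What remains is well-definedness, and the identity laws, which rest
  on two properties of passing: it is transitive (through A then B, and through B then C,
  gives through A then C), and a curve through A then B also passes through A then A and
  through B then B.\<close>

lemma passes_trans: "passes A B r \<Longrightarrow> passes B C r \<Longrightarrow> passes A C r"
  unfolding passes_def by (meson order_trans)

lemma passes_refl_source: "passes A B r \<Longrightarrow> passes A A r"
  unfolding passes_def by (meson order_refl)

lemma passes_refl_target: "passes A B r \<Longrightarrow> passes B B r"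
  unfolding passes_def by (meson order_refl)

lemma Ccurves_trans: "\<gamma> \<in> Ccurves fdc A B \<Longrightarrow> \<gamma> \<in> Ccurves fdc B C \<Longrightarrow> \<gamma> \<in> Ccurves fdc A C"
  unfolding Ccurves_def using passes_trans by blast

lemma Ccurves_refl_source: "\<gamma> \<in> Ccurves fdc A B \<Longrightarrow> \<gamma> \<in> Ccurves fdc A A"
  unfolding Ccurves_def using passes_refl_source by blast

lemma Ccurves_refl_target: "\<gamma> \<in> Ccurves fdc A B \<Longrightarrow> \<gamma> \<in> Ccurves fdc B B"
  unfolding Ccurves_def using passes_refl_target by blast

lemma wedge_act_in_wedge_obj:
  assumes "U \<in> slice_hom fdc Z' Z" and "C \<in> wedge_obj fdc X Y Z"
  shows "wedge_act U C \<in> wedge_obj fdc X Y Z'"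
  using assms Ccurves_trans
  unfolding slice_hom_def wedge_obj_def wedge_act_def by blast

lemma wedge_act_id:
  assumes "C \<in> wedge_obj fdc X Y Z"
  shows "wedge_act (slice_id fdc Z) C = C"
  using assms Ccurves_refl_source
  unfolding wedge_obj_def wedge_act_def slice_id_def by blast

lemma wedge_act_comp: "wedge_act (slice_comp U U') C = wedge_act U' (wedge_act U C)"
  unfolding wedge_act_def slice_comp_def by blast

lemma wedge_arr_in_wedge_obj:
  assumes "S \<in> slice_hom fdc X X'" and "T \<in> slice_hom fdc Y Y'"
    and "C \<in> wedge_obj fdc X Y Z"
  shows "wedge_arr S T Z C \<in> wedge_obj fdc X' Y' Z"
  using assms Ccurves_trans
  unfolding slice_hom_def wedge_obj_def wedge_arr_def by blast

lemma wedge_arr_natural: "wedge_arr S T Z' (wedge_act U C) = wedge_act U (wedge_arr S T Z C)"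
  unfolding wedge_arr_def wedge_act_def by blast

lemma wedge_arr_id:
  assumes "C \<in> wedge_obj fdc X Y Z"
  shows "wedge_arr (slice_id fdc X) (slice_id fdc Y) Z C = C"
  using assms Ccurves_refl_target
  unfolding wedge_obj_def wedge_arr_def slice_id_def by blast

lemma wedge_arr_comp:
  "wedge_arr (slice_comp S' S) (slice_comp T' T) Z C = wedge_arr S' T' Z (wedge_arr S T Z C)"
  unfolding wedge_arr_def slice_comp_def by blast

theorem mainTheorem6:
  fixes fdc :: "real set \<Rightarrow> (real \<Rightarrow> 'p::topological_space) \<Rightarrow> bool"
  shows
   \<comment> \<open>object part: each (X \<and> Y)(-) is a presheaf Slice^op \<rightarrow> Set\<close>
   "(\<forall>X Y. slice fdc X \<longrightarrow> slice fdc Y \<longrightarrow>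
       (\<forall>Z Z' U C. slice fdc Z \<longrightarrow> slice fdc Z' \<longrightarrow> U \<in> slice_hom fdc Z' Z \<longrightarrow>
            C \<in> wedge_obj fdc X Y Z \<longrightarrow> wedge_act U C \<in> wedge_obj fdc X Y Z')
     \<and> (\<forall>Z C. slice fdc Z \<longrightarrow> C \<in> wedge_obj fdc X Y Z \<longrightarrow> wedge_act (slice_id fdc Z) C = C)
     \<and> (\<forall>Z Z' Z'' U U' C. slice fdc Z \<longrightarrow> slice fdc Z' \<longrightarrow> slice fdc Z'' \<longrightarrow>
            U \<in> slice_hom fdc Z' Z \<longrightarrow> U' \<in> slice_hom fdc Z'' Z' \<longrightarrow> C \<in> wedge_obj fdc X Y Z \<longrightarrow>
            wedge_act (slice_comp U U') C = wedge_act U' (wedge_act U C)))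
  \<and> \<comment> \<open>morphism part: S \<and> T is a well-defined natural transformation\<close>
   (\<forall>X Y X' Y' S T. slice fdc X \<longrightarrow> slice fdc Y \<longrightarrow> slice fdc X' \<longrightarrow> slice fdc Y' \<longrightarrow>
       S \<in> slice_hom fdc X X' \<longrightarrow> T \<in> slice_hom fdc Y Y' \<longrightarrow>
       (\<forall>Z C. slice fdc Z \<longrightarrow> C \<in> wedge_obj fdc X Y Z \<longrightarrow>
            wedge_arr S T Z C \<in> wedge_obj fdc X' Y' Z)
     \<and> (\<forall>Z Z' U C. slice fdc Z \<longrightarrow> slice fdc Z' \<longrightarrow> U \<in> slice_hom fdc Z' Z \<longrightarrow>
            C \<in> wedge_obj fdc X Y Z \<longrightarrow>
            wedge_arr S T Z' (wedge_act U C) = wedge_act U (wedge_arr S T Z C)))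
  \<and> \<comment> \<open>preservation of identities\<close>
   (\<forall>X Y. slice fdc X \<longrightarrow> slice fdc Y \<longrightarrow>
       (\<forall>Z C. slice fdc Z \<longrightarrow> C \<in> wedge_obj fdc X Y Z \<longrightarrow>
            wedge_arr (slice_id fdc X) (slice_id fdc Y) Z C = C))
  \<and> \<comment> \<open>preservation of composition (componentwise composition in Slice \<times> Slice)\<close>
   (\<forall>X Y X' Y' X'' Y'' S T S' T'. slice fdc X \<longrightarrow> slice fdc Y \<longrightarrow> slice fdc X' \<longrightarrow>
       slice fdc Y' \<longrightarrow> slice fdc X'' \<longrightarrow> slice fdc Y'' \<longrightarrow>
       S \<in> slice_hom fdc X X' \<longrightarrow> T \<in> slice_hom fdc Y Y' \<longrightarrow>
       S' \<in> slice_hom fdc X' X'' \<longrightarrow> T' \<in> slice_hom fdc Y' Y'' \<longrightarrow>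
       (\<forall>Z C. slice fdc Z \<longrightarrow> C \<in> wedge_obj fdc X Y Z \<longrightarrow>
            wedge_arr (slice_comp S' S) (slice_comp T' T) Z C
              = wedge_arr S' T' Z (wedge_arr S T Z C)))"
  by (simp add: wedge_act_in_wedge_obj wedge_act_id wedge_act_comp wedge_arr_in_wedge_obj
      wedge_arr_natural wedge_arr_id wedge_arr_comp)

end
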